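(* Let $V:\mathbb R^3\to\mathbb R$ be in $L^\infty_{loc}(\mathbb R^3)$ with $\operatorname{ess\,inf}V>0$, let $\varepsilon>0$, and assume $W_\varepsilon$ embeds compactly into $L^p(\mathbb R^3)$ for every $p\in(2,6)$. Let $f:\mathbb R\to\mathbb R$ be continuous, satisfying either ($f(u)\ge0$ for $u\ge0$ and $f(u)=0$ for $u\le0$) or ($f$ odd and $f(u)\ge0$ for $u\ge0$), and such that there is $q\in(2,6)$ with $\lim_{u\to\infty}f(u)/u^{q-1}=0$ and $\lim_{u\to0}f(u)/u=0$. Then $$\mathfrak m_\varepsilon:=\inf_{u\in\mathcal M_\varepsilon}I_\varepsilon(u)>0.$$
   Context: $F(t)=\int_0^tf(s)\,ds$. $W_\varepsilon:=\{u\in H^1(\mathbb R^3):\int_{\mathbb R^3}V(\varepsilon x)u^2<\infty\}$ with norm $\|u\|_{W_\varepsilon}^2=\int|\nabla u|^2+\int V(\varepsilon x)u^2$. For $u\in H^1(\mathbb R^3)$, $\phi_u(x)=\int_{\mathbb R^3}\frac{1-e^{-|x-y|}}{|x-y|}u^2(y)\,dy$; $\mathcal M_\varepsilon=\{u\in W_\varepsilon:\int\phi_uu^2=1\}$ and $I_\varepsilon(u)=\frac12\|u\|_{W_\varepsilon}^2+\int_{\mathbb R^3}F(u)$. *)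

theory Defs
  imports "HOL-Analysis.Analysis"
begin

type_synonym R3 = "real ^ 3"

definition partial :: "3 \<Rightarrow> (R3 \<Rightarrow> real) \<Rightarrow> R3 \<Rightarrow> real" where
  "partial i \<phi> x = frechet_derivative \<phi> (at x) (axis i 1)"

coinductive_set smooth :: "(R3 \<Rightarrow> real) set" where
  "(\<forall>x. \<phi> differentiable (at x)) \<Longrightarrow> (\<forall>i. partial i \<phi> \<in> smooth) \<Longrightarrow> \<phi> \<in> smooth"

definition test_fun :: "(R3 \<Rightarrow> real) \<Rightarrow> bool" where
  "test_fun \<phi> \<longleftrightarrow> \<phi> \<in> smooth \<and> compact (closure {x. \<phi> x \<noteq> 0})"

definition L2 :: "(R3 \<Rightarrow> real) \<Rightarrow> bool" where
  "L2 u \<longleftrightarrow> u \<in> borel_measurable lebesgue \<and> integrable lebesgue (\<lambda>x. (u x)\<^sup>2)"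

definition Lp :: "real \<Rightarrow> (R3 \<Rightarrow> real) \<Rightarrow> bool" where
  "Lp p u \<longleftrightarrow> u \<in> borel_measurable lebesgue \<and> integrable lebesgue (\<lambda>x. \<bar>u x\<bar> powr p)"

definition weak_partial :: "(R3 \<Rightarrow> real) \<Rightarrow> 3 \<Rightarrow> (R3 \<Rightarrow> real) \<Rightarrow> bool" where
  "weak_partial u i g \<longleftrightarrow> (\<forall>\<phi>. test_fun \<phi> \<longrightarrow>
     (\<integral>x. u x * partial i \<phi> x \<partial>lebesgue) = - (\<integral>x. g x * \<phi> x \<partial>lebesgue))"

definition H1 :: "(R3 \<Rightarrow> real) set" where
  "H1 = {u. L2 u \<and> (\<forall>i. \<exists>g. L2 g \<and> weak_partial u i g)}"

definition wgrad :: "(R3 \<Rightarrow> real) \<Rightarrow> 3 \<Rightarrow> R3 \<Rightarrow> real" where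
  "wgrad u i = (SOME g. L2 g \<and> weak_partial u i g)"

definition grad_sq :: "(R3 \<Rightarrow> real) \<Rightarrow> real" where
  "grad_sq u = (\<Sum>i\<in>UNIV. \<integral>x. (wgrad u i x)\<^sup>2 \<partial>lebesgue)"

definition W :: "(R3 \<Rightarrow> real) \<Rightarrow> real \<Rightarrow> (R3 \<Rightarrow> real) set" where
  "W V \<epsilon> = {u \<in> H1. integrable lebesgue (\<lambda>x. V (\<epsilon> *\<^sub>R x) * (u x)\<^sup>2)}"

definition W_norm_sq :: "(R3 \<Rightarrow> real) \<Rightarrow> real \<Rightarrow> (R3 \<Rightarrow> real) \<Rightarrow> real" where
  "W_norm_sq V \<epsilon> u = grad_sq u + (\<integral>x. V (\<epsilon> *\<^sub>R x) * (u x)\<^sup>2 \<partial>lebesgue)"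

definition phi :: "(R3 \<Rightarrow> real) \<Rightarrow> R3 \<Rightarrow> real" where
  "phi u x = (\<integral>y. (1 - exp (- dist x y)) / dist x y * (u y)\<^sup>2 \<partial>lebesgue)"

definition Mset :: "(R3 \<Rightarrow> real) \<Rightarrow> real \<Rightarrow> (R3 \<Rightarrow> real) set" where
  "Mset V \<epsilon> = {u \<in> W V \<epsilon>. (\<integral>x. phi u x * (u x)\<^sup>2 \<partial>lebesgue) = 1}"

definition primitive :: "(real \<Rightarrow> real) \<Rightarrow> real \<Rightarrow> real" where
  "primitive f t = (LBINT s=0..t. f s)"

definition I_eps :: "(R3 \<Rightarrow> real) \<Rightarrow> real \<Rightarrow> (real \<Rightarrow> real) \<Rightarrow> (R3 \<Rightarrow> real) \<Rightarrow> real" where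
  "I_eps V \<epsilon> f u = W_norm_sq V \<epsilon> u / 2 + (\<integral>x. primitive f (u x) \<partial>lebesgue)"

definition Linf_loc :: "(R3 \<Rightarrow> real) \<Rightarrow> bool" where
  "Linf_loc V \<longleftrightarrow> V \<in> borel_measurable lebesgue \<and>
     (\<forall>K. compact K \<longrightarrow> (\<exists>C. AE x in lebesgue. x \<in> K \<longrightarrow> \<bar>V x\<bar> \<le> C))"

definition compact_embed :: "(R3 \<Rightarrow> real) \<Rightarrow> real \<Rightarrow> real \<Rightarrow> bool" where
  "compact_embed V \<epsilon> p \<longleftrightarrow> (\<forall>u :: nat \<Rightarrow> R3 \<Rightarrow> real.
     (\<forall>n. u n \<in> W V \<epsilon>) \<and> (\<exists>B. \<forall>n. W_norm_sq V \<epsilon> (u n) \<le> B) \<longrightarrow>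
     (\<exists>r v. strict_mono r \<and> Lp p v \<and>
        (\<lambda>n. \<integral>x. \<bar>u (r n) x - v x\<bar> powr p \<partial>lebesgue) \<longlonglongrightarrow> 0))"

end

theory Submission
  imports Defs
begin

text \<open>
  The kernel of \<open>\<phi>\<^sub>u\<close> satisfies \<open>0 \<le> (1 - exp (-r))/r \<le> 1\<close>, so \<open>\<phi>\<^sub>u \<le> |u|\<^sub>2\<^sup>2\<close> pointwise
  and the constraint \<open>\<integral>\<phi>\<^sub>u u\<^sup>2 = 1\<close> forces \<open>|u|\<^sub>2 \<ge> 1\<close> on \<open>\<M>\<^sub>\<epsilon>\<close>. With \<open>V \<ge> c > 0\<close> this
  gives \<open>\<parallel>u\<parallel>\<^sup>2 \<ge> c\<close>, while the sign conditions on \<open>f\<close> make \<open>F \<ge> 0\<close>; hence \<open>I\<^sub>\<epsilon> \<ge> c/2\<close> on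
  \<open>\<M>\<^sub>\<epsilon>\<close>.
\<close>

lemma primitive_nonneg:
  fixes f :: "real \<Rightarrow> real"
  assumes pos: "\<And>u. u \<ge> 0 \<Longrightarrow> f u \<ge> 0" and neg: "\<And>u. u \<le> 0 \<Longrightarrow> f u \<le> 0"
  shows "primitive f t \<ge> 0"
proof (cases "t \<ge> 0")
  case True
  have "(LBINT s=0..t. f s) = (LBINT s : {0..t}. f s)"
    using interval_integral_Icc[of 0 t f] True by (simp add: zero_ereal_def)
  also have "\<dots> \<ge> 0" unfolding set_lebesgue_integral_def
    by (rule integral_nonneg_AE) (simp add: indicator_def pos)
  finally show ?thesis unfolding primitive_def .
next
  case False
  have "(LBINT s=t..0. f s) = (LBINT s : {t..0}. f s)"
    using interval_integral_Icc[of t 0 f] False by (simp add: zero_ereal_def)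
  also have "\<dots> \<le> 0" unfolding set_lebesgue_integral_def
  proof -
    have "0 \<le> (\<integral>x. - (indicator {t..0} x *\<^sub>R f x) \<partial>lborel)"
      by (rule integral_nonneg_AE) (simp add: indicator_def neg)
    then show "(\<integral>x. indicator {t..0} x *\<^sub>R f x \<partial>lborel) \<le> 0" by simp
  qed
  finally show ?thesis unfolding primitive_def
    by (subst interval_integral_endpoints_reverse) simp
qed

lemma one_minus_exp_neg_div_bounds:
  fixes r :: real
  assumes "r \<ge> 0"
  shows "0 \<le> (1 - exp (- r)) / r" and "(1 - exp (- r)) / r \<le> 1"
proof -
  have "1 - exp (- r) \<le> r" using exp_ge_add_one_self[of "- r"] by simp
  moreover have "0 \<le> 1 - exp (- r)" using assms by simp
  ultimately show "0 \<le> (1 - exp (- r)) / r" and "(1 - exp (- r)) / r \<le> 1"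
    using assms by (auto simp: divide_le_eq_1)
qed

lemma phi_le_L2_norm_sq:
  assumes "integrable lebesgue (\<lambda>y. (u y)\<^sup>2)"
  shows "phi u x \<le> (\<integral>y. (u y)\<^sup>2 \<partial>lebesgue)"
proof (cases "integrable lebesgue (\<lambda>y. (1 - exp (- dist x y)) / dist x y * (u y)\<^sup>2)")
  case True
  show ?thesis unfolding phi_def
    by (rule integral_mono[OF True assms])
       (intro mult_left_le_one_le; simp add: one_minus_exp_neg_div_bounds)
next
  case False
  then show ?thesis unfolding phi_def
    by (simp add: not_integrable_integral_eq integral_nonneg_AE)
qed

lemma L2_norm_sq_ge_1_if_phi_normalised:
  assumes iu: "integrable lebesgue (\<lambda>y. (u y)\<^sup>2)"
    and normalised: "(\<integral>x. phi u x * (u x)\<^sup>2 \<partial>lebesgue) = 1"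
  shows "1 \<le> (\<integral>y. (u y)\<^sup>2 \<partial>lebesgue)"
proof -
  define A where "A = (\<integral>y. (u y)\<^sup>2 \<partial>lebesgue)"
  have "A \<ge> 0" unfolding A_def by (rule integral_nonneg_AE) auto
  have "integrable lebesgue (\<lambda>x. phi u x * (u x)\<^sup>2)"
    using normalised not_integrable_integral_eq by fastforce
  then have "1 \<le> (\<integral>x. A * (u x)\<^sup>2 \<partial>lebesgue)"
    unfolding normalised[symmetric] A_def
    by (rule integral_mono) (auto intro!: mult_right_mono phi_le_L2_norm_sq iu)
  also have "\<dots> = A * A" unfolding A_def by simp
  finally have "1 \<le> A * A" .
  with \<open>A \<ge> 0\<close> show ?thesis unfolding A_def[symmetric]
    using power2_le_imp_le[of 1 A] by (simp add: power2_eq_square)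
qed

lemma AE_lebesgue_scaleR:
  fixes P :: "'a::euclidean_space \<Rightarrow> bool"
  assumes "AE x in lebesgue. P x" and "\<epsilon> \<noteq> 0"
  shows "AE x in lebesgue. P (\<epsilon> *\<^sub>R x)"
proof -
  obtain N where N: "{x. \<not> P x} \<subseteq> N" "N \<in> null_sets lebesgue"
    using assms(1) by (auto simp: eventually_ae_filter)
  have "negligible ((\<lambda>x. inverse \<epsilon> *\<^sub>R x) ` N)"
    by (rule negligible_differentiable_image_negligible)
       (auto simp: negligible_iff_null_sets N intro!: derivative_intros)
  moreover have "{x. \<not> P (\<epsilon> *\<^sub>R x)} \<subseteq> (\<lambda>x. inverse \<epsilon> *\<^sub>R x) ` N"
  proof
    fix x assume "x \<in> {x. \<not> P (\<epsilon> *\<^sub>R x)}"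
    then have "\<epsilon> *\<^sub>R x \<in> N" using N(1) by blast
    moreover have "x = inverse \<epsilon> *\<^sub>R (\<epsilon> *\<^sub>R x)" using assms(2) by simp
    ultimately show "x \<in> (\<lambda>x. inverse \<epsilon> *\<^sub>R x) ` N" by blast
  qed
  ultimately show ?thesis
    by (intro AE_I') (simp_all add: negligible_iff_null_sets)
qed

lemma grad_sq_nonneg: "0 \<le> grad_sq u"
  unfolding grad_sq_def by (intro sum_nonneg integral_nonneg_AE) auto

lemma W_norm_sq_ge_L2_norm_sq:
  assumes u: "u \<in> W V \<epsilon>" and V: "AE x in lebesgue. c \<le> V (\<epsilon> *\<^sub>R x)"
  shows "c * (\<integral>x. (u x)\<^sup>2 \<partial>lebesgue) \<le> W_norm_sq V \<epsilon> u"
proof -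
  have iu: "integrable lebesgue (\<lambda>x. (u x)\<^sup>2)"
    and iV: "integrable lebesgue (\<lambda>x. V (\<epsilon> *\<^sub>R x) * (u x)\<^sup>2)"
    using u unfolding W_def H1_def L2_def by auto
  have "c * (\<integral>x. (u x)\<^sup>2 \<partial>lebesgue) = (\<integral>x. c * (u x)\<^sup>2 \<partial>lebesgue)" by simp
  also have "\<dots> \<le> (\<integral>x. V (\<epsilon> *\<^sub>R x) * (u x)\<^sup>2 \<partial>lebesgue)"
    using iu iV V by (intro integral_mono_AE) (auto elim!: eventually_mono intro: mult_right_mono)
  finally show ?thesis unfolding W_norm_sq_def using grad_sq_nonneg[of u] by linarith
qed

theorem lemma2p7:
  fixes V :: "R3 \<Rightarrow> real" and \<epsilon> :: real and f :: "real \<Rightarrow> real" and q :: real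
  assumes "Linf_loc V"
    and "\<exists>c>0. AE x in lebesgue. c \<le> V x"
    and "\<epsilon> > 0"
    and "\<forall>p. 2 < p \<and> p < 6 \<longrightarrow> compact_embed V \<epsilon> p"
    and "continuous_on UNIV f"
    and "(\<forall>u\<ge>0. f u \<ge> 0) \<and> (\<forall>u\<le>0. f u = 0) \<or> (\<forall>u. f (- u) = - f u) \<and> (\<forall>u\<ge>0. f u \<ge> 0)"
    and "2 < q" and "q < 6"
    and "((\<lambda>u. f u / u powr (q - 1)) \<longlongrightarrow> 0) at_top"
    and "((\<lambda>u. f u / u) \<longlongrightarrow> 0) (at 0)"
  shows "(INF u\<in>Mset V \<epsilon>. ereal (I_eps V \<epsilon> f u)) > 0"
proof -
  obtain c where "c > 0" and V: "AE x in lebesgue. c \<le> V x" using assms(2) by blast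
  have V_scaled: "AE x in lebesgue. c \<le> V (\<epsilon> *\<^sub>R x)"
    using AE_lebesgue_scaleR[OF V] assms(3) by simp
  have f_pos: "f u \<ge> 0" if "u \<ge> 0" for u using assms(6) that by blast
  have f_neg: "f u \<le> 0" if "u \<le> 0" for u
    using assms(6)
  proof
    assume "(\<forall>u\<ge>0. f u \<ge> 0) \<and> (\<forall>u\<le>0. f u = 0)"
    then show ?thesis using that by simp
  next
    assume "(\<forall>u. f (- u) = - f u) \<and> (\<forall>u\<ge>0. f u \<ge> 0)"
    then have "f (- u) = - f u" by blast
    moreover have "f (- u) \<ge> 0" using f_pos[of "- u"] that by simp
    ultimately show ?thesis by linarith
  qed
  have "c / 2 \<le> I_eps V \<epsilon> f u" if u: "u \<in> Mset V \<epsilon>" for u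
  proof -
    have "u \<in> W V \<epsilon>" and "integrable lebesgue (\<lambda>x. (u x)\<^sup>2)"
      and "(\<integral>x. phi u x * (u x)\<^sup>2 \<partial>lebesgue) = 1"
      using u unfolding Mset_def W_def H1_def L2_def by auto
    then have "c \<le> c * (\<integral>x. (u x)\<^sup>2 \<partial>lebesgue)"
      using L2_norm_sq_ge_1_if_phi_normalised \<open>c > 0\<close> by simp
    also have "\<dots> \<le> W_norm_sq V \<epsilon> u"
      using W_norm_sq_ge_L2_norm_sq[OF \<open>u \<in> W V \<epsilon>\<close> V_scaled] .
    moreover have "0 \<le> (\<integral>x. primitive f (u x) \<partial>lebesgue)"
      by (intro integral_nonneg_AE AE_I2 primitive_nonneg f_pos f_neg)
    ultimately show ?thesis unfolding I_eps_def by linarith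
  qed
  then have "ereal (c / 2) \<le> (INF u\<in>Mset V \<epsilon>. ereal (I_eps V \<epsilon> f u))"
    by (intro INF_greatest) simp
  moreover have "0 < ereal (c / 2)" using \<open>c > 0\<close> by simp
  ultimately show ?thesis by (rule less_le_trans[rotated])
qed

end
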